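(* Let $n\ge1$ and $\alpha\ge0$. There is a constant $C>0$ such that for all $k\in\mathbb N$ and all $f\in L^2(\mathbb R^n)$, $$k^{\alpha/4}\|\chi_{[k,k+1)}(H)f\|_{L^2(\mathbb R^n)}\le C\|\chi_{[k,k+1)}(H)f\|_{L^2(\mathbb R^n,(1+|x|)^\alpha dx)}.$$
   Context: $H=-\Delta+|x|^2$ on $\mathbb R^n$, with orthonormal eigenbasis of Hermite functions $\Phi_\mu(x)=\prod_ih_{\mu_i}(x_i)$, $\mu\in\mathbb N_0^n$, $H\Phi_\mu=(2|\mu|+n)\Phi_\mu$ ($h_k$ the one-dimensional Hermite functions). For $E\subset\mathbb R$, $\chi_E(H)f=\sum_{\mu:\,2|\mu|+n\in E}\langle f,\Phi_\mu\rangle\Phi_\mu$. *)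

theory Defs
  imports "HOL-Analysis.Analysis"
begin

fun hermite_poly :: "nat \<Rightarrow> real \<Rightarrow> real" where
  "hermite_poly 0 x = 1"
| "hermite_poly (Suc 0) x = 2 * x"
| "hermite_poly (Suc (Suc k)) x = 2 * x * hermite_poly (Suc k) x - 2 * real (Suc k) * hermite_poly k x"

definition hermite_fun :: "nat \<Rightarrow> real \<Rightarrow> real" where
  "hermite_fun k x = hermite_poly k x * exp (- (x ^ 2) / 2) / sqrt (2 ^ k * fact k * sqrt pi)"

definition hermite_nd :: "('n::finite \<Rightarrow> nat) \<Rightarrow> real ^ 'n \<Rightarrow> real" where
  "hermite_nd \<mu> x = (\<Prod>i\<in>UNIV. hermite_fun (\<mu> i) (x $ i))"

definition mi_abs :: "('n::finite \<Rightarrow> nat) \<Rightarrow> nat" where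
  "mi_abs \<mu> = (\<Sum>i\<in>UNIV. \<mu> i)"

text \<open>Eigenvalue 2|mu| + n of the Hermite operator on Phi_mu.\<close>
definition herm_eig :: "('n::finite \<Rightarrow> nat) \<Rightarrow> real" where
  "herm_eig \<mu> = 2 * real (mi_abs \<mu>) + real CARD('n)"

definition L2 :: "(real ^ 'n::finite \<Rightarrow> complex) set" where
  "L2 = {f. f \<in> borel_measurable lborel \<and> integrable lborel (\<lambda>x. (cmod (f x))\<^sup>2)}"

text \<open>L^2 inner product <f, Phi_mu> (Phi_mu is real valued).\<close>
definition herm_coeff :: "(real ^ 'n::finite \<Rightarrow> complex) \<Rightarrow> ('n \<Rightarrow> nat) \<Rightarrow> complex" where
  "herm_coeff f \<mu> = (LINT x|lborel. f x * complex_of_real (hermite_nd \<mu> x))"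

text \<open>Spectral projection chi_E(H) f = sum over mu with 2|mu|+n in E.
  Used only for bounded E, where the index set is finite.\<close>
definition spec_proj :: "real set \<Rightarrow> (real ^ 'n::finite \<Rightarrow> complex) \<Rightarrow> real ^ 'n \<Rightarrow> complex" where
  "spec_proj E f x = (\<Sum>\<mu>\<in>{\<mu>::'n \<Rightarrow> nat. herm_eig \<mu> \<in> E}.
       herm_coeff f \<mu> * complex_of_real (hermite_nd \<mu> x))"

definition L2_norm :: "(real ^ 'n::finite \<Rightarrow> complex) \<Rightarrow> real" where
  "L2_norm g = sqrt (LINT x|lborel. (cmod (g x))\<^sup>2)"

definition L2_weighted_norm :: "real \<Rightarrow> (real ^ 'n::finite \<Rightarrow> complex) \<Rightarrow> real" where
  "L2_weighted_norm \<alpha> g = sqrt (LINT x|lborel. (cmod (g x))\<^sup>2 * (1 + norm x) powr \<alpha>)"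

end

theory Submission
  imports Defs "HOL-Probability.Probability" "HOL-Real_Asymp.Real_Asymp"
begin

text \<open>
  Since the window [k, k+1) contains at most one eigenvalue of H, the function
  g = chi_[k,k+1)(H) f is a finite combination of Hermite functions Phi_mu of a single degree
  |mu| = m with 2m + n >= k. Orthonormality of the h_a and the recurrence
  x h_a = sqrt((a+1)/2) h_(a+1) + sqrt(a/2) h_(a-1) give the moments
  int |x|^2 |g|^2 = (m + n/2) ||g||^2 and int |x|^4 |g|^2 <= 2 n^2 (m+1)^2 ||g||^2.
  A second moment of size k together with a fourth moment of size k^2 forces a fixed fraction
  of the mass of |g|^2 into the region |x|^2 >= c k, where the weight (1 + |x|)^alpha is at
  least (c k)^(alpha/2).
\<close>

section \<open>Hermite polynomials and Gaussian integrals\<close>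

lemma hermite_poly_Suc:
  "hermite_poly (Suc k) x = 2 * x * hermite_poly k x - 2 * real k * hermite_poly (k - 1) x"
  by (cases k) auto

lemma hermite_poly_has_real_derivative:
  "(hermite_poly k has_real_derivative 2 * real k * hermite_poly (k - 1) x) (at x)"
proof (induction k x rule: hermite_poly.induct)
  case (3 k x)
  have "((\<lambda>x. 2 * x * hermite_poly (Suc k) x - 2 * real (Suc k) * hermite_poly k x)
      has_real_derivative 2 * hermite_poly (Suc k) x + 2 * x * (2 * real (Suc k) * hermite_poly k x)
        - 2 * real (Suc k) * (2 * real k * hermite_poly (k - 1) x)) (at x)"
    using 3 by (auto intro!: derivative_eq_intros)
  then show ?case
    by (simp add: hermite_poly_Suc algebra_simps)
qed (auto intro!: derivative_eq_intros)

lemma continuous_on_hermite_poly [continuous_intros]: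
  "continuous_on S f \<Longrightarrow> continuous_on S (\<lambda>x. hermite_poly k (f x))"
  by (rule continuous_on_compose2[of UNIV, OF _ _ subset_UNIV])
     (auto intro: DERIV_isCont hermite_poly_has_real_derivative continuous_at_imp_continuous_on)

definition poly_bounded :: "(real \<Rightarrow> real) \<Rightarrow> bool" where
  "poly_bounded q \<longleftrightarrow> (\<exists>A N. \<forall>x. \<bar>q x\<bar> \<le> A * (1 + x\<^sup>2) ^ N)"

lemma poly_boundedE:
  assumes "poly_bounded q"
  obtains A N where "A \<ge> 0" "\<And>x. \<bar>q x\<bar> \<le> A * (1 + x\<^sup>2) ^ N"
proof -
  obtain A N where bound: "\<And>x. \<bar>q x\<bar> \<le> A * (1 + x\<^sup>2) ^ N"
    using assms unfolding poly_bounded_def by blast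
  moreover have "A \<ge> 0"
    using bound[of 0] by simp
  ultimately show thesis
    using that by blast
qed

lemma poly_bounded_const: "poly_bounded (\<lambda>x. c)"
  unfolding poly_bounded_def by (intro exI[of _ "\<bar>c\<bar>"] exI[of _ 0]) simp

lemma poly_bounded_ident: "poly_bounded (\<lambda>x. x)"
proof -
  have "\<bar>x\<bar> \<le> 1 + x\<^sup>2" for x :: real
    using abs_mult_self_eq[of x] sum_power2_ge_zero[of "\<bar>x\<bar> - 1" 0]
    by (simp add: power2_eq_square algebra_simps)
  then show ?thesis
    unfolding poly_bounded_def by (intro exI[of _ 1] exI[of _ 1]) simp
qed

lemma poly_bounded_mult:
  assumes "poly_bounded p" "poly_bounded q"
  shows "poly_bounded (\<lambda>x. p x * q x)"
proof -
  obtain A N where "A \<ge> 0" and p: "\<And>x. \<bar>p x\<bar> \<le> A * (1 + x\<^sup>2) ^ N"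
    using poly_boundedE[OF assms(1)] by blast
  obtain B M where "B \<ge> 0" and q: "\<And>x. \<bar>q x\<bar> \<le> B * (1 + x\<^sup>2) ^ M"
    using poly_boundedE[OF assms(2)] by blast
  have "\<bar>p x * q x\<bar> \<le> (A * (1 + x\<^sup>2) ^ N) * (B * (1 + x\<^sup>2) ^ M)" for x
    unfolding abs_mult using \<open>A \<ge> 0\<close> by (intro mult_mono p q) auto
  then have "\<bar>p x * q x\<bar> \<le> (A * B) * (1 + x\<^sup>2) ^ (N + M)" for x
    by (simp add: power_add mult_ac)
  then show ?thesis
    unfolding poly_bounded_def by blast
qed

lemma poly_bounded_add:
  assumes "poly_bounded p" "poly_bounded q"
  shows "poly_bounded (\<lambda>x. p x + q x)"
proof -
  obtain A N where "A \<ge> 0" and p: "\<And>x. \<bar>p x\<bar> \<le> A * (1 + x\<^sup>2) ^ N"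
    using poly_boundedE[OF assms(1)] by blast
  obtain B M where "B \<ge> 0" and q: "\<And>x. \<bar>q x\<bar> \<le> B * (1 + x\<^sup>2) ^ M"
    using poly_boundedE[OF assms(2)] by blast
  have "\<bar>p x + q x\<bar> \<le> (A + B) * (1 + x\<^sup>2) ^ (N + M)" for x
  proof -
    have "A * (1 + x\<^sup>2) ^ N \<le> A * (1 + x\<^sup>2) ^ (N + M)" "B * (1 + x\<^sup>2) ^ M \<le> B * (1 + x\<^sup>2) ^ (N + M)"
      using \<open>A \<ge> 0\<close> \<open>B \<ge> 0\<close> by (auto intro!: mult_left_mono power_increasing)
    then show ?thesis
      using p[of x] q[of x] by (simp add: distrib_right)
  qed
  then show ?thesis
    unfolding poly_bounded_def by blast
qed

lemma poly_bounded_diff: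
  "poly_bounded p \<Longrightarrow> poly_bounded q \<Longrightarrow> poly_bounded (\<lambda>x. p x - q x)"
  using poly_bounded_add[OF _ poly_bounded_mult[OF poly_bounded_const[of "-1"]]] by simp

lemma poly_bounded_abs: "poly_bounded p \<Longrightarrow> poly_bounded (\<lambda>x. \<bar>p x\<bar>)"
  unfolding poly_bounded_def by simp

lemma poly_bounded_power: "poly_bounded p \<Longrightarrow> poly_bounded (\<lambda>x. p x ^ n)"
  by (induction n) (auto intro: poly_bounded_const poly_bounded_mult)

lemma poly_bounded_hermite_poly: "poly_bounded (hermite_poly k)"
proof -
  have "poly_bounded (hermite_poly k) \<and> poly_bounded (hermite_poly (Suc k))"
  proof (induction k)
    case 0
    show ?case
      using poly_bounded_const[of 1] poly_bounded_mult[OF poly_bounded_const[of 2] poly_bounded_ident]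
      by simp
  next
    case (Suc k)
    then have "poly_bounded (\<lambda>x. 2 * x * hermite_poly (Suc k) x - 2 * real (Suc k) * hermite_poly k x)"
      by (intro poly_bounded_diff poly_bounded_mult poly_bounded_const poly_bounded_ident) auto
    with Suc show ?case
      by simp
  qed
  then show ?thesis ..
qed

lemma power_le_exp_scaled:
  assumes "s \<ge> 0"
  shows "s ^ N \<le> real N ^ N * exp s"
proof (cases "N = 0")
  case False
  have "(s / real N) ^ N \<le> (1 + s / real N) ^ N"
    using assms by (intro power_mono) auto
  also have "\<dots> \<le> exp s"
    using assms False by (intro exp_ge_one_plus_x_over_n_power_n) auto
  finally show ?thesis
    using False by (simp add: power_divide field_simps)
qed (use assms in simp)

lemma poly_bounded_gaussian_le:
  assumes "poly_bounded q"
  obtains B where "\<And>x. \<bar>q x * exp (- x\<^sup>2)\<bar> \<le> B * exp (- x\<^sup>2 / 2)"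
proof -
  obtain A N where "A \<ge> 0" and q: "\<And>x. \<bar>q x\<bar> \<le> A * (1 + x\<^sup>2) ^ N"
    using poly_boundedE[OF assms] by blast
  have "\<bar>q x * exp (- x\<^sup>2)\<bar> \<le> (A * 2 ^ N * real N ^ N * exp (1 / 2)) * exp (- x\<^sup>2 / 2)" for x
  proof -
    have "((1 + x\<^sup>2) / 2) ^ N \<le> real N ^ N * exp ((1 + x\<^sup>2) / 2)"
      by (intro power_le_exp_scaled) simp
    then have "(1 + x\<^sup>2) ^ N * exp (- x\<^sup>2) \<le> 2 ^ N * real N ^ N * exp ((1 + x\<^sup>2) / 2) * exp (- x\<^sup>2)"
      by (simp add: power_divide field_simps)
    also have "\<dots> = 2 ^ N * real N ^ N * exp (1 / 2) * exp (- x\<^sup>2 / 2)"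
      by (simp add: mult.assoc flip: exp_add)
    finally have "A * ((1 + x\<^sup>2) ^ N * exp (- x\<^sup>2)) \<le> A * (2 ^ N * real N ^ N * exp (1 / 2) * exp (- x\<^sup>2 / 2))"
      using \<open>A \<ge> 0\<close> by (rule mult_left_mono)
    moreover have "\<bar>q x * exp (- x\<^sup>2)\<bar> \<le> A * (1 + x\<^sup>2) ^ N * exp (- x\<^sup>2)"
      using q[of x] by (simp add: abs_mult)
    ultimately show ?thesis
      by (simp add: mult_ac)
  qed
  then show thesis
    using that by blast
qed

lemma integrable_poly_bounded_gaussian:
  assumes "poly_bounded q" "continuous_on UNIV q"
  shows "integrable lborel (\<lambda>x. q x * exp (- x\<^sup>2))"
proof -
  obtain B where B: "\<And>x. \<bar>q x * exp (- x\<^sup>2)\<bar> \<le> B * exp (- x\<^sup>2 / 2)"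
    using poly_bounded_gaussian_le[OF assms(1)] by blast
  have "integrable lborel (\<lambda>x. B * (sqrt (2 * pi) * std_normal_density x))"
    by simp
  then have "integrable lborel (\<lambda>x. B * exp (- x\<^sup>2 / 2))"
    by (simp add: std_normal_density_def)
  moreover have [measurable]: "q \<in> borel_measurable borel"
    using assms(2) by (rule borel_measurable_continuous_onI)
  then have "(\<lambda>x. q x * exp (- x\<^sup>2)) \<in> borel_measurable lborel"
    by measurable
  moreover have "AE x in lborel. norm (q x * exp (- x\<^sup>2)) \<le> norm (B * exp (- x\<^sup>2 / 2))"
    using B by (intro AE_I2) (metis abs_ge_self order_trans real_norm_def)
  ultimately show ?thesis
    by (rule Bochner_Integration.integrable_bound)
qed

lemma tendsto_poly_bounded_gaussian:
  assumes "poly_bounded q" "F = at_top \<or> F = at_bot"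
  shows "((\<lambda>x. q x * exp (- x\<^sup>2)) \<longlongrightarrow> 0) F"
proof -
  obtain B where B: "\<And>x. \<bar>q x * exp (- x\<^sup>2)\<bar> \<le> B * exp (- x\<^sup>2 / 2)"
    using poly_bounded_gaussian_le[OF assms(1)] by blast
  have "((\<lambda>x::real. B * exp (- x\<^sup>2 / 2)) \<longlongrightarrow> 0) F"
    using assms(2) by (elim disjE) (simp, intro tendsto_mult_right_zero, real_asymp)+
  then show ?thesis
    by (rule Lim_null_comparison[rotated], intro always_eventually allI) (simp only: real_norm_def B)
qed

lemma integral_gaussian: "(\<integral>x. exp (- x\<^sup>2) \<partial>lborel) = sqrt pi"
  using has_bochner_integral_even_function[OF gaussian_moment_even_pos[of 0]]
  by (simp add: has_bochner_integral_integral_eq)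

lemma integral_derivative_eq_0:
  fixes F f :: "real \<Rightarrow> real"
  assumes "\<And>x. (F has_real_derivative f x) (at x)" "continuous_on UNIV f" "integrable lborel f"
    and "(F \<longlongrightarrow> 0) at_top" "(F \<longlongrightarrow> 0) at_bot"
  shows "(\<integral>x. f x \<partial>lborel) = 0"
proof -
  have "(LBINT x=-\<infinity>..\<infinity>. f x) = 0 - 0"
  proof (rule interval_integral_FTC_integrable)
    show "(F has_vector_derivative f x) (at x)" for x
      using assms(1) by (simp add: has_real_derivative_iff_has_vector_derivative)
    show "isCont f x" for x
      using assms(2) by (simp add: continuous_on_eq_continuous_at)
    show "set_integrable lborel (einterval (- \<infinity>) \<infinity>) f"
      using assms(3) by (simp add: set_integrable_def)
    show "((F \<circ> real_of_ereal) \<longlongrightarrow> 0) (at_right (- \<infinity>))" "((F \<circ> real_of_ereal) \<longlongrightarrow> 0) (at_left \<infinity>)"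
      using assms(4,5) by (simp_all add: ereal_tendsto_simps1)
  qed simp
  then show ?thesis
    by (simp add: interval_lebesgue_integral_def set_lebesgue_integral_def)
qed

lemma integrable_hermite_poly_gaussian:
  "integrable lborel (\<lambda>x. hermite_poly j x * hermite_poly k x * exp (- x\<^sup>2))"
  by (rule integrable_poly_bounded_gaussian)
     (auto intro!: poly_bounded_mult poly_bounded_hermite_poly continuous_intros)

section \<open>Orthonormality and moments of Hermite functions\<close>

definition hermite_gram :: "nat \<Rightarrow> nat \<Rightarrow> real" where
  "hermite_gram j k = (\<integral>x. hermite_poly j x * hermite_poly k x * exp (- x\<^sup>2) \<partial>lborel)"

lemma hermite_gram_commute: "hermite_gram j k = hermite_gram k j"
  unfolding hermite_gram_def by (simp add: mult.commute)

text \<open>Integration by parts, using (H_k e^(-x^2))' = - H_(k+1) e^(-x^2).\<close>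
lemma hermite_gram_Suc_right: "hermite_gram j (Suc k) = 2 * real j * hermite_gram (j - 1) k"
proof -
  define F where "F x = hermite_poly j x * hermite_poly k x * exp (- x\<^sup>2)" for x
  define f where "f x = 2 * real j * (hermite_poly (j - 1) x * hermite_poly k x * exp (- x\<^sup>2))
     - hermite_poly j x * hermite_poly (Suc k) x * exp (- x\<^sup>2)" for x
  have "(F has_real_derivative f x) (at x)" for x
  proof -
    have "(F has_real_derivative
      (2 * real j * hermite_poly (j - 1) x * hermite_poly k x
        + hermite_poly j x * (2 * real k * hermite_poly (k - 1) x)) * exp (- x\<^sup>2)
       + hermite_poly j x * hermite_poly k x * (exp (- x\<^sup>2) * (- (2 * x)))) (at x)"
      unfolding F_def by (auto intro!: derivative_eq_intros hermite_poly_has_real_derivative)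
    then show ?thesis
      unfolding f_def by (simp add: hermite_poly_Suc algebra_simps)
  qed
  moreover have "continuous_on UNIV f"
    unfolding f_def by (intro continuous_intros)
  moreover have "integrable lborel f"
    unfolding f_def
    by (intro Bochner_Integration.integrable_diff integrable_mult_right integrable_hermite_poly_gaussian)
  moreover have "(F \<longlongrightarrow> 0) at_top" "(F \<longlongrightarrow> 0) at_bot"
    unfolding F_def
    by (intro tendsto_poly_bounded_gaussian poly_bounded_mult poly_bounded_hermite_poly; simp)+
  ultimately have "(\<integral>x. f x \<partial>lborel) = 0"
    by (rule integral_derivative_eq_0)
  moreover have "(\<integral>x. f x \<partial>lborel) = 2 * real j * hermite_gram (j - 1) k - hermite_gram j (Suc k)"
    unfolding f_def hermite_gram_def
    by (simp add: integrable_hermite_poly_gaussian)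
  ultimately show ?thesis
    by simp
qed

lemma hermite_gram_eq: "hermite_gram j k = (if j = k then 2 ^ k * fact k * sqrt pi else 0)"
proof (induction k arbitrary: j)
  case 0
  show ?case
  proof (cases j)
    case 0
    then show ?thesis
      by (simp add: hermite_gram_def integral_gaussian)
  next
    case (Suc j')
    then show ?thesis
      using hermite_gram_Suc_right[of 0 j'] hermite_gram_commute[of j 0] by simp
  qed
next
  case (Suc k)
  then show ?case
    using hermite_gram_Suc_right[of j k] by (cases j) auto
qed

definition hermite_scale :: "nat \<Rightarrow> real" where
  "hermite_scale a = sqrt (2 ^ a * fact a * sqrt pi)"

lemma hermite_scale_pos: "hermite_scale a > 0"
  unfolding hermite_scale_def by simp

lemma hermite_scale_Suc: "hermite_scale (Suc a) = sqrt (2 * (real a + 1)) * hermite_scale a"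
  unfolding hermite_scale_def by (simp add: algebra_simps flip: real_sqrt_mult)

lemma hermite_fun_eq: "hermite_fun a x = hermite_poly a x * exp (- x\<^sup>2 / 2) / hermite_scale a"
  unfolding hermite_fun_def hermite_scale_def by simp

lemma hermite_fun_mult:
  "hermite_fun a x * hermite_fun b x
     = hermite_poly a x * hermite_poly b x * exp (- x\<^sup>2) / (hermite_scale a * hermite_scale b)"
proof -
  have "exp (- x\<^sup>2 / 2) * exp (- x\<^sup>2 / 2) = exp (- x\<^sup>2)"
    by (simp flip: exp_add)
  then show ?thesis
    unfolding hermite_fun_eq by (simp add: field_simps)
qed

lemma continuous_on_hermite_fun [continuous_intros]:
  "continuous_on S f \<Longrightarrow> continuous_on S (\<lambda>x. hermite_fun k (f x))"
  unfolding hermite_fun_eq using hermite_scale_pos[of k] by (intro continuous_intros) auto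

lemma integrable_hermite_fun_mult:
  assumes "poly_bounded q" "continuous_on UNIV q"
  shows "integrable lborel (\<lambda>x. q x * hermite_fun a x * hermite_fun b x)"
proof -
  have "integrable lborel (\<lambda>x. (q x * hermite_poly a x * hermite_poly b x) * exp (- x\<^sup>2))"
    using assms by (intro integrable_poly_bounded_gaussian poly_bounded_mult poly_bounded_hermite_poly
      continuous_on_mult continuous_on_hermite_poly continuous_on_id)
  then have "integrable lborel
      (\<lambda>x. q x * hermite_poly a x * hermite_poly b x * exp (- x\<^sup>2) / (hermite_scale a * hermite_scale b))"
    by (rule integrable_divide_zero)
  then show ?thesis
    by (simp add: mult.assoc hermite_fun_mult)
qed

lemma integrable_hermite_fun_mult_power:
  "integrable lborel (\<lambda>x. x ^ p * hermite_fun a x * hermite_fun b x)"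
  by (rule integrable_hermite_fun_mult)
     (auto intro: poly_bounded_power poly_bounded_ident continuous_intros)

lemma hermite_fun_orthonormal:
  "(\<integral>x. hermite_fun a x * hermite_fun b x \<partial>lborel) = (if a = b then 1 else 0)"
  using hermite_gram_eq[of a b] hermite_scale_pos[of a]
  by (simp add: hermite_fun_mult hermite_gram_def) (simp add: hermite_scale_def)

lemma hermite_fun_recurrence:
  "x * hermite_fun a x
     = sqrt ((real a + 1) / 2) * hermite_fun (Suc a) x + sqrt (real a / 2) * hermite_fun (a - 1) x"
proof -
  let ?e = "exp (- x\<^sup>2 / 2) / hermite_scale a"
  have up: "sqrt ((real a + 1) / 2) * hermite_fun (Suc a) x = hermite_poly (Suc a) x / 2 * ?e"
  proof -
    have "sqrt (2 * (real a + 1)) = sqrt 4 * sqrt ((real a + 1) / 2)"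
      by (subst real_sqrt_mult[symmetric]) simp
    then have "sqrt (2 * (real a + 1)) = 2 * sqrt ((real a + 1) / 2)"
      by simp
    moreover have "sqrt ((real a + 1) / 2) > 0"
      by simp
    ultimately show ?thesis
      unfolding hermite_fun_eq hermite_scale_Suc using hermite_scale_pos[of a] by (simp add: field_simps)
  qed
  have down: "sqrt (real a / 2) * hermite_fun (a - 1) x = real a * hermite_poly (a - 1) x * ?e"
  proof (cases a)
    case (Suc b)
    have "sqrt (real a / 2) * sqrt (2 * real a) = real a"
      by (simp flip: real_sqrt_mult)
    then have scale: "sqrt (real a / 2) / hermite_scale b = real a / hermite_scale a"
      unfolding Suc hermite_scale_Suc using hermite_scale_pos[of b] by (simp add: field_simps)
    have "sqrt (real a / 2) * hermite_fun (a - 1) x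
        = sqrt (real a / 2) / hermite_scale b * (hermite_poly b x * exp (- x\<^sup>2 / 2))"
      unfolding hermite_fun_eq Suc by simp
    also have "\<dots> = real a / hermite_scale a * (hermite_poly b x * exp (- x\<^sup>2 / 2))"
      by (simp only: scale)
    finally show ?thesis
      using Suc by simp
  qed simp
  have rec: "x * hermite_poly a x = hermite_poly (Suc a) x / 2 + real a * hermite_poly (a - 1) x"
    by (simp only: hermite_poly_Suc) (simp add: field_simps)
  have "x * hermite_fun a x = (x * hermite_poly a x) * ?e"
    by (simp add: hermite_fun_eq)
  also have "\<dots> = (hermite_poly (Suc a) x / 2 + real a * hermite_poly (a - 1) x) * ?e"
    by (simp only: rec)
  finally show ?thesis
    unfolding up down by (simp add: algebra_simps)
qed

lemma hermite_fun_second_moment: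
  "(\<integral>x. x\<^sup>2 * hermite_fun a x * hermite_fun a x \<partial>lborel) = real a + 1 / 2"
proof -
  define u v where "u = sqrt ((real a + 1) / 2)" and "v = sqrt (real a / 2)"
  let ?U = "hermite_fun (Suc a)" and ?V = "hermite_fun (a - 1)"
  have rec: "x * hermite_fun a x = u * ?U x + v * ?V x" for x
    unfolding u_def v_def by (rule hermite_fun_recurrence)
  have "x\<^sup>2 * hermite_fun a x * hermite_fun a x
      = u\<^sup>2 * (?U x * ?U x) + 2 * u * v * (?U x * ?V x) + v\<^sup>2 * (?V x * ?V x)" for x
  proof -
    have "x\<^sup>2 * hermite_fun a x * hermite_fun a x = (x * hermite_fun a x)\<^sup>2"
      by (simp add: power2_eq_square)
    then show ?thesis
      unfolding rec by (simp add: power2_eq_square algebra_simps)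
  qed
  then have "(\<integral>x. x\<^sup>2 * hermite_fun a x * hermite_fun a x \<partial>lborel)
      = u\<^sup>2 * (\<integral>x. ?U x * ?U x \<partial>lborel) + 2 * u * v * (\<integral>x. ?U x * ?V x \<partial>lborel)
        + v\<^sup>2 * (\<integral>x. ?V x * ?V x \<partial>lborel)"
    using integrable_hermite_fun_mult_power[of 0] by simp
  also have "\<dots> = u\<^sup>2 + v\<^sup>2"
    by (simp add: hermite_fun_orthonormal)
  finally show ?thesis
    unfolding u_def v_def by (simp add: field_simps)
qed

lemma hermite_fun_fourth_moment_le:
  "(\<integral>x. x ^ 4 * hermite_fun a x * hermite_fun a x \<partial>lborel) \<le> 2 * (real a + 1)\<^sup>2"
proof -
  define u v where "u = sqrt ((real a + 1) / 2)" and "v = sqrt (real a / 2)"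
  let ?U = "hermite_fun (Suc a)" and ?V = "hermite_fun (a - 1)"
  have rec: "x * hermite_fun a x = u * ?U x + v * ?V x" for x
    unfolding u_def v_def by (rule hermite_fun_recurrence)
  have "x ^ 4 * hermite_fun a x * hermite_fun a x
      \<le> 2 * u\<^sup>2 * (x\<^sup>2 * ?U x * ?U x) + 2 * v\<^sup>2 * (x\<^sup>2 * ?V x * ?V x)" for x
  proof -
    have "x ^ 4 * hermite_fun a x * hermite_fun a x = x\<^sup>2 * (x * hermite_fun a x)\<^sup>2"
      by (simp add: power2_eq_square power4_eq_xxxx)
    also have "\<dots> = x\<^sup>2 * (u * ?U x + v * ?V x)\<^sup>2"
      unfolding rec ..
    also have "\<dots> \<le> x\<^sup>2 * (2 * (u * ?U x)\<^sup>2 + 2 * (v * ?V x)\<^sup>2)"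
      using sum_power2_ge_zero[of "u * ?U x - v * ?V x" 0]
      by (intro mult_left_mono) (simp_all add: power2_eq_square algebra_simps)
    finally show ?thesis
      by (simp add: power2_eq_square algebra_simps)
  qed
  then have "(\<integral>x. x ^ 4 * hermite_fun a x * hermite_fun a x \<partial>lborel)
      \<le> (\<integral>x. 2 * u\<^sup>2 * (x\<^sup>2 * ?U x * ?U x) + 2 * v\<^sup>2 * (x\<^sup>2 * ?V x * ?V x) \<partial>lborel)"
    by (intro integral_mono) (auto intro!: integrable_hermite_fun_mult_power)
  also have "\<dots> = 2 * u\<^sup>2 * (real (Suc a) + 1 / 2) + 2 * v\<^sup>2 * (real (a - 1) + 1 / 2)"
    by (simp add: integrable_hermite_fun_mult_power hermite_fun_second_moment)
  also have "\<dots> \<le> 2 * (real a + 1)\<^sup>2"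
    unfolding u_def v_def by (cases a) (simp_all add: power2_eq_square field_simps)
  finally show ?thesis .
qed

section \<open>Integrals of tensor products on \<open>\<real>\<^sup>n\<close>\<close>

lemma
  fixes F :: "'a::euclidean_space \<Rightarrow> real \<Rightarrow> real"
  assumes integrable: "\<And>b. integrable lborel (F b)"
  shows integrable_prod_Basis: "integrable lborel (\<lambda>x::'a. \<Prod>b\<in>Basis. F b (x \<bullet> b))"
    and integral_prod_Basis:
      "(\<integral>x. (\<Prod>b\<in>Basis. F b (x \<bullet> b)) \<partial>(lborel::'a measure)) = (\<Prod>b\<in>Basis. integral\<^sup>L lborel (F b))"
proof -
  interpret product_sigma_finite "\<lambda>_::'a. lborel::real measure"
    by (simp add: product_sigma_finite_def lborel.sigma_finite_measure_axioms)
  have [measurable]: "F b \<in> borel_measurable borel" for b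
    using borel_measurable_integrable[OF integrable[of b]] by simp
  have T [measurable]: "(\<lambda>f. \<Sum>b\<in>Basis. f b *\<^sub>R b) \<in> (\<Pi>\<^sub>M b\<in>Basis. lborel) \<rightarrow>\<^sub>M (borel :: 'a measure)"
    by measurable
  have F_T: "(\<Prod>b\<in>Basis. F b ((\<Sum>c\<in>Basis. f c *\<^sub>R c) \<bullet> b)) = (\<Prod>b\<in>Basis. F b (f b))" for f
    by (intro prod.cong refl) (simp add: inner_sum_left inner_Basis if_distrib sum.delta cong: if_cong)
  have "(\<lambda>x::'a. \<Prod>b\<in>Basis. F b (x \<bullet> b)) \<in> borel_measurable borel"
    by measurable
  moreover have "integrable (\<Pi>\<^sub>M b\<in>Basis. lborel) (\<lambda>f. \<Prod>b\<in>Basis. F b (f b))"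
    by (rule product_integrable_prod) (auto intro: integrable)
  ultimately show "integrable lborel (\<lambda>x::'a. \<Prod>b\<in>Basis. F b (x \<bullet> b))"
    by (subst lborel_eq) (simp add: integrable_distr_eq[OF T] F_T)
  show "(\<integral>x. (\<Prod>b\<in>Basis. F b (x \<bullet> b)) \<partial>(lborel::'a measure)) = (\<Prod>b\<in>Basis. integral\<^sup>L lborel (F b))"
    by (subst lborel_eq, subst integral_distr[OF T], measurable)
       (simp add: F_T product_integral_prod integrable)
qed

lemma
  fixes F :: "'n::finite \<Rightarrow> real \<Rightarrow> real"
  assumes "\<And>j. integrable lborel (F j)"
  shows integrable_prod_vec_nth: "integrable lborel (\<lambda>x::real ^ 'n. \<Prod>j\<in>UNIV. F j (x $ j))"
    and integral_prod_vec_nth: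
      "(\<integral>x. (\<Prod>j\<in>UNIV. F j (x $ j)) \<partial>(lborel::(real ^ 'n) measure)) = (\<Prod>j\<in>UNIV. integral\<^sup>L lborel (F j))"
proof -
  have Basis: "(Basis :: (real ^ 'n) set) = range (\<lambda>j. axis j 1)" and inj: "inj (\<lambda>j::'n. axis j (1::real))"
    by (auto simp: Basis_vec_def inj_on_def axis_eq_axis)
  have prod_eq: "(\<Prod>b\<in>Basis. F (axis_index b) (x \<bullet> b)) = (\<Prod>j\<in>UNIV. F j (x $ j))"
    for x :: "real ^ 'n"
    unfolding Basis by (simp add: prod.reindex[OF inj] inner_axis)
  have integral_eq: "(\<Prod>b\<in>(Basis :: (real ^ 'n) set). integral\<^sup>L lborel (F (axis_index b)))
      = (\<Prod>j\<in>UNIV. integral\<^sup>L lborel (F j))"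
    unfolding Basis by (simp add: prod.reindex[OF inj])
  show "integrable lborel (\<lambda>x::real ^ 'n. \<Prod>j\<in>UNIV. F j (x $ j))"
    using integrable_prod_Basis[of "\<lambda>b::real ^ 'n. F (axis_index b)"] assms by (simp only: prod_eq)
  show "(\<integral>x. (\<Prod>j\<in>UNIV. F j (x $ j)) \<partial>(lborel::(real ^ 'n) measure)) = (\<Prod>j\<in>UNIV. integral\<^sup>L lborel (F j))"
    using integral_prod_Basis[of "\<lambda>b::real ^ 'n. F (axis_index b)"] assms by (simp only: prod_eq integral_eq)
qed

lemma continuous_on_hermite_nd: "continuous_on UNIV (hermite_nd \<mu>)"
  unfolding hermite_nd_def[abs_def]
  by (intro continuous_on_prod continuous_on_hermite_fun continuous_on_component continuous_on_id)

lemma borel_measurable_hermite_nd [measurable]: "hermite_nd \<mu> \<in> borel_measurable borel"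
  by (rule borel_measurable_continuous_onI[OF continuous_on_hermite_nd])

lemma
  fixes w :: "'n::finite \<Rightarrow> real \<Rightarrow> real" and \<mu> \<nu> :: "'n \<Rightarrow> nat"
  assumes "\<And>j. poly_bounded (w j)" "\<And>j. continuous_on UNIV (w j)"
  shows integrable_hermite_nd_mult:
      "integrable lborel (\<lambda>x. (\<Prod>j\<in>UNIV. w j (x $ j)) * (hermite_nd \<mu> x * hermite_nd \<nu> x))"
    and integral_hermite_nd_mult:
      "(\<integral>x. (\<Prod>j\<in>UNIV. w j (x $ j)) * (hermite_nd \<mu> x * hermite_nd \<nu> x) \<partial>lborel)
        = (\<Prod>j\<in>UNIV. \<integral>t. w j t * hermite_fun (\<mu> j) t * hermite_fun (\<nu> j) t \<partial>lborel)"
proof -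
  define F where "F j t = w j t * hermite_fun (\<mu> j) t * hermite_fun (\<nu> j) t" for j t
  have F: "(\<Prod>j\<in>UNIV. w j (x $ j)) * (hermite_nd \<mu> x * hermite_nd \<nu> x) = (\<Prod>j\<in>UNIV. F j (x $ j))"
    for x :: "real ^ 'n"
    unfolding hermite_nd_def F_def by (simp add: prod.distrib)
  have integrable_F: "integrable lborel (F j)" for j
    unfolding F_def using assms by (rule integrable_hermite_fun_mult)
  show
      "integrable lborel (\<lambda>x. (\<Prod>j\<in>UNIV. w j (x $ j)) * (hermite_nd \<mu> x * hermite_nd \<nu> x))"
      "(\<integral>x. (\<Prod>j\<in>UNIV. w j (x $ j)) * (hermite_nd \<mu> x * hermite_nd \<nu> x) \<partial>lborel)
        = (\<Prod>j\<in>UNIV. \<integral>t. w j t * hermite_fun (\<mu> j) t * hermite_fun (\<nu> j) t \<partial>lborel)"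
    unfolding F using integrable_prod_vec_nth[of F, OF integrable_F] integral_prod_vec_nth[of F, OF integrable_F]
    by (simp_all add: F_def[abs_def])
qed

section \<open>Hermite expansions within one eigenspace\<close>

definition hermite_sum :: "('n::finite \<Rightarrow> nat) set \<Rightarrow> (('n \<Rightarrow> nat) \<Rightarrow> complex) \<Rightarrow> real ^ 'n \<Rightarrow> complex" where
  "hermite_sum S c x = (\<Sum>\<mu>\<in>S. c \<mu> * complex_of_real (hermite_nd \<mu> x))"

lemma borel_measurable_hermite_sum [measurable]: "hermite_sum S c \<in> borel_measurable borel"
  unfolding hermite_sum_def[abs_def] by measurable

lemma norm_hermite_sum_squared:
  "(cmod (hermite_sum S c x))\<^sup>2
     = (\<Sum>\<mu>\<in>S. \<Sum>\<nu>\<in>S. Re (c \<mu> * cnj (c \<nu>)) * (hermite_nd \<mu> x * hermite_nd \<nu> x))"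
proof -
  have "hermite_sum S c x * cnj (hermite_sum S c x)
      = (\<Sum>\<mu>\<in>S. \<Sum>\<nu>\<in>S. (c \<mu> * cnj (c \<nu>)) * complex_of_real (hermite_nd \<mu> x * hermite_nd \<nu> x))"
    unfolding hermite_sum_def by (simp add: cnj_sum sum_product algebra_simps)
  then have "Re (hermite_sum S c x * cnj (hermite_sum S c x))
      = (\<Sum>\<mu>\<in>S. \<Sum>\<nu>\<in>S. Re (c \<mu> * cnj (c \<nu>)) * (hermite_nd \<mu> x * hermite_nd \<nu> x))"
    by (simp add: Re_sum)
  then show ?thesis
    by (simp add: complex_mult_cnj cmod_power2)
qed

lemma differs_at_other_coordinateE:
  fixes \<mu> \<nu> :: "'n::finite \<Rightarrow> nat"
  assumes "mi_abs \<mu> = mi_abs \<nu>" "\<mu> \<noteq> \<nu>"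
  obtains j where "j \<noteq> i" "\<mu> j \<noteq> \<nu> j"
proof -
  have "\<mu> j = \<nu> j" if "\<forall>j. j \<noteq> i \<longrightarrow> \<mu> j = \<nu> j" for j
  proof -
    have "(\<Sum>j\<in>UNIV - {i}. \<mu> j) = (\<Sum>j\<in>UNIV - {i}. \<nu> j)"
      using that by (intro sum.cong) auto
    then have "\<mu> i = \<nu> i"
      using assms(1) unfolding mi_abs_def by (simp add: sum.remove[of UNIV i])
    with that show ?thesis
      by metis
  qed
  with assms(2) that show thesis
    by (metis ext)
qed

text \<open>Off-diagonal terms vanish: two multi-indices of the same length cannot differ in the
  coordinate \<open>i\<close> alone, and in any other coordinate the factors are orthogonal Hermite functions.\<close>
lemma
  fixes S :: "('n::finite \<Rightarrow> nat) set"
  assumes "finite S" "\<And>\<mu>. \<mu> \<in> S \<Longrightarrow> mi_abs \<mu> = m"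
  shows integrable_coordinate_moment_hermite_sum:
      "integrable lborel (\<lambda>x. (x $ i) ^ p * (cmod (hermite_sum S c x))\<^sup>2)"
    and integral_coordinate_moment_hermite_sum:
      "(\<integral>x. (x $ i) ^ p * (cmod (hermite_sum S c x))\<^sup>2 \<partial>lborel)
        = (\<Sum>\<mu>\<in>S. (cmod (c \<mu>))\<^sup>2 * (\<integral>t. t ^ p * hermite_fun (\<mu> i) t * hermite_fun (\<mu> i) t \<partial>lborel))"
proof -
  define w where "w j t = (if j = i then t ^ p else 1)" for j and t :: real
  have "poly_bounded (w j)" for j
    unfolding w_def[abs_def] by (cases "j = i") (simp_all add: poly_bounded_power poly_bounded_ident poly_bounded_const)
  moreover have "continuous_on UNIV (w j)" for j
    unfolding w_def[abs_def] by (cases "j = i") (simp_all add: continuous_intros)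
  ultimately have w: "poly_bounded (w j)" "continuous_on UNIV (w j)" for j
    by blast+
  have prod_w: "(\<Prod>j\<in>UNIV. w j (x $ j)) = (x $ i) ^ p" for x :: "real ^ 'n"
    unfolding w_def by (simp add: prod.If_cases)
  have expand: "(x $ i) ^ p * (cmod (hermite_sum S c x))\<^sup>2
      = (\<Sum>\<mu>\<in>S. \<Sum>\<nu>\<in>S. Re (c \<mu> * cnj (c \<nu>)) * ((\<Prod>j\<in>UNIV. w j (x $ j)) * (hermite_nd \<mu> x * hermite_nd \<nu> x)))" for x
    unfolding norm_hermite_sum_squared prod_w by (simp add: sum_distrib_left mult_ac)
  show "integrable lborel (\<lambda>x. (x $ i) ^ p * (cmod (hermite_sum S c x))\<^sup>2)"
    unfolding expand using w by (intro Bochner_Integration.integrable_sum integrable_mult_right integrable_hermite_nd_mult)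
  have coordinate_integral: "(\<Prod>j\<in>UNIV. \<integral>t. w j t * hermite_fun (\<mu> j) t * hermite_fun (\<nu> j) t \<partial>lborel)
      = (if \<mu> = \<nu> then \<integral>t. t ^ p * hermite_fun (\<mu> i) t * hermite_fun (\<mu> i) t \<partial>lborel else 0)"
    if "\<mu> \<in> S" and "\<nu> \<in> S" for \<mu> \<nu>
  proof (cases "\<mu> = \<nu>")
    case True
    have "(\<integral>t. w j t * hermite_fun (\<mu> j) t * hermite_fun (\<mu> j) t \<partial>lborel)
        = (if j = i then \<integral>t. t ^ p * hermite_fun (\<mu> i) t * hermite_fun (\<mu> i) t \<partial>lborel else 1)" for j
      by (cases "j = i") (simp_all add: w_def hermite_fun_orthonormal)
    with True show ?thesis
      by simp
  next
    case False
    obtain j where "j \<noteq> i" "\<mu> j \<noteq> \<nu> j"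
      using differs_at_other_coordinateE[of \<mu> \<nu> i] False assms(2) \<open>\<mu> \<in> S\<close> \<open>\<nu> \<in> S\<close> by metis
    then have "(\<integral>t. w j t * hermite_fun (\<mu> j) t * hermite_fun (\<nu> j) t \<partial>lborel) = 0"
      by (simp add: w_def hermite_fun_orthonormal)
    with False show ?thesis
      by (auto simp: prod_zero_iff)
  qed
  have "(\<integral>x. (x $ i) ^ p * (cmod (hermite_sum S c x))\<^sup>2 \<partial>lborel)
      = (\<Sum>\<mu>\<in>S. \<Sum>\<nu>\<in>S. Re (c \<mu> * cnj (c \<nu>))
          * (\<Prod>j\<in>UNIV. \<integral>t. w j t * hermite_fun (\<mu> j) t * hermite_fun (\<nu> j) t \<partial>lborel))"
    unfolding expand using w
    by (simp add: integrable_hermite_nd_mult integral_hermite_nd_mult Bochner_Integration.integrable_sum)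
  also have "\<dots> = (\<Sum>\<mu>\<in>S. \<Sum>\<nu>\<in>S. if \<nu> = \<mu>
      then Re (c \<mu> * cnj (c \<mu>)) * (\<integral>t. t ^ p * hermite_fun (\<mu> i) t * hermite_fun (\<mu> i) t \<partial>lborel) else 0)"
    by (intro sum.cong refl) (auto simp: coordinate_integral)
  also have "\<dots> = (\<Sum>\<mu>\<in>S. (cmod (c \<mu>))\<^sup>2 * (\<integral>t. t ^ p * hermite_fun (\<mu> i) t * hermite_fun (\<mu> i) t \<partial>lborel))"
    using assms(1) by (simp add: cmod_power2 complex_mult_cnj)
  finally show "(\<integral>x. (x $ i) ^ p * (cmod (hermite_sum S c x))\<^sup>2 \<partial>lborel)
      = (\<Sum>\<mu>\<in>S. (cmod (c \<mu>))\<^sup>2 * (\<integral>t. t ^ p * hermite_fun (\<mu> i) t * hermite_fun (\<mu> i) t \<partial>lborel))" .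
qed

lemma norm_vec_squared: "(norm x)\<^sup>2 = (\<Sum>i\<in>UNIV. (x $ i)\<^sup>2)"
  for x :: "real ^ 'n::finite"
  unfolding norm_vec_def L2_set_def by (simp add: sum_nonneg)

lemma norm_vec_power4_le: "norm x ^ 4 \<le> real CARD('n) * (\<Sum>i\<in>UNIV. (x $ i) ^ 4)"
  for x :: "real ^ 'n::finite"
proof -
  have "norm x ^ 4 = (\<Sum>i\<in>UNIV. (x $ i)\<^sup>2)\<^sup>2"
    by (simp flip: norm_vec_squared)
  also have "\<dots> \<le> (\<Sum>i\<in>UNIV. ((x $ i)\<^sup>2)\<^sup>2) * card (UNIV :: 'n set)"
    by (rule sum_squared_le_sum_of_squares)
  finally show ?thesis
    by (simp add: mult.commute)
qed

lemma one_plus_sum_le_prod: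
  fixes a :: "'a \<Rightarrow> real"
  assumes "finite A" "\<And>j. j \<in> A \<Longrightarrow> a j \<ge> 0"
  shows "1 + (\<Sum>j\<in>A. a j) \<le> (\<Prod>j\<in>A. 1 + a j)"
  using assms
proof (induction A rule: finite_induct)
  case (insert x F)
  have "1 + (\<Sum>j\<in>insert x F. a j) \<le> (1 + a x) * (1 + (\<Sum>j\<in>F. a j))"
    using insert by (simp add: algebra_simps sum_nonneg)
  also have "\<dots> \<le> (1 + a x) * (\<Prod>j\<in>F. 1 + a j)"
    using insert by (intro mult_left_mono) auto
  finally show ?case
    using insert by simp
qed simp

lemma one_plus_norm_powr_le_prod:
  fixes x :: "real ^ 'n::finite"
  assumes "\<alpha> \<ge> 0"
  shows "(1 + norm x) powr \<alpha> \<le> (\<Prod>j\<in>UNIV. (1 + \<bar>x $ j\<bar>) ^ nat \<lceil>\<alpha>\<rceil>)"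
proof -
  have "1 + norm x \<le> 1 + (\<Sum>j\<in>UNIV. \<bar>x $ j\<bar>)"
    using norm_le_l1_cart[of x] by simp
  also have "\<dots> \<le> (\<Prod>j\<in>UNIV. 1 + \<bar>x $ j\<bar>)"
    by (rule one_plus_sum_le_prod) auto
  finally have "(1 + norm x) powr \<alpha> \<le> (\<Prod>j\<in>UNIV. 1 + \<bar>x $ j\<bar>) powr \<alpha>"
    using assms by (intro powr_mono2) auto
  also have "\<dots> \<le> (\<Prod>j\<in>UNIV. 1 + \<bar>x $ j\<bar>) powr real (nat \<lceil>\<alpha>\<rceil>)"
  proof (intro powr_mono prod_ge_1)
    show "\<alpha> \<le> real (nat \<lceil>\<alpha>\<rceil>)"
      using assms by linarith
  qed simp_all
  also have "\<dots> = (\<Prod>j\<in>UNIV. (1 + \<bar>x $ j\<bar>) ^ nat \<lceil>\<alpha>\<rceil>)"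
    by (subst powr_realpow) (auto intro: prod_pos simp: prod_power_distrib)
  finally show ?thesis .
qed

lemma integrable_weighted_norm_hermite_sum:
  fixes S :: "('n::finite \<Rightarrow> nat) set"
  assumes "finite S" "\<alpha> \<ge> 0"
  shows "integrable lborel (\<lambda>x. (cmod (hermite_sum S c x))\<^sup>2 * (1 + norm x) powr \<alpha>)"
proof (rule Bochner_Integration.integrable_bound)
  define w where "w t = (1 + \<bar>t\<bar>) ^ nat \<lceil>\<alpha>\<rceil>" for t :: real
  let ?D = "\<lambda>x. \<Sum>\<mu>\<in>S. \<Sum>\<nu>\<in>S. \<bar>Re (c \<mu> * cnj (c \<nu>))\<bar> *
     \<bar>(\<Prod>j\<in>UNIV. w (x $ j)) * (hermite_nd \<mu> x * hermite_nd \<nu> x)\<bar>"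
  have "poly_bounded w" "continuous_on UNIV w"
    unfolding w_def[abs_def]
    by (auto intro!: poly_bounded_power poly_bounded_add poly_bounded_abs poly_bounded_const poly_bounded_ident
        continuous_intros)
  then show "integrable lborel ?D"
    by (intro Bochner_Integration.integrable_sum integrable_mult_right integrable_abs integrable_hermite_nd_mult)
  show "AE x in lborel. norm ((cmod (hermite_sum S c x))\<^sup>2 * (1 + norm x) powr \<alpha>) \<le> norm (?D x)"
  proof (intro AE_I2)
    fix x :: "real ^ 'n"
    have "(cmod (hermite_sum S c x))\<^sup>2 \<le> (\<Sum>\<mu>\<in>S. \<Sum>\<nu>\<in>S. \<bar>Re (c \<mu> * cnj (c \<nu>))\<bar> * \<bar>hermite_nd \<mu> x * hermite_nd \<nu> x\<bar>)"
      unfolding norm_hermite_sum_squared by (intro sum_mono) (metis abs_ge_self abs_mult)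
    moreover have "(1 + norm x) powr \<alpha> \<le> (\<Prod>j\<in>UNIV. w (x $ j))"
      unfolding w_def using assms(2) by (rule one_plus_norm_powr_le_prod)
    ultimately have "(cmod (hermite_sum S c x))\<^sup>2 * (1 + norm x) powr \<alpha>
        \<le> (\<Sum>\<mu>\<in>S. \<Sum>\<nu>\<in>S. \<bar>Re (c \<mu> * cnj (c \<nu>))\<bar> * \<bar>hermite_nd \<mu> x * hermite_nd \<nu> x\<bar>) * (\<Prod>j\<in>UNIV. w (x $ j))"
      by (intro mult_mono sum_nonneg) auto
    also have "\<dots> = ?D x"
      using prod_nonneg[of UNIV "\<lambda>j. w (x $ j)"] unfolding sum_distrib_right
      by (intro sum.cong refl) (simp add: abs_mult w_def)
    finally show "norm ((cmod (hermite_sum S c x))\<^sup>2 * (1 + norm x) powr \<alpha>) \<le> norm (?D x)"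
      by simp
  qed
qed measurable

context
  fixes S :: "('n::finite \<Rightarrow> nat) set" and c :: "('n \<Rightarrow> nat) \<Rightarrow> complex" and m :: nat
  assumes finite: "finite S" and level: "\<And>\<mu>. \<mu> \<in> S \<Longrightarrow> mi_abs \<mu> = m"
begin

lemma
  shows integrable_norm_hermite_sum: "integrable lborel (\<lambda>x. (cmod (hermite_sum S c x))\<^sup>2)"
    and integral_norm_hermite_sum: "(\<integral>x. (cmod (hermite_sum S c x))\<^sup>2 \<partial>lborel) = (\<Sum>\<mu>\<in>S. (cmod (c \<mu>))\<^sup>2)"
proof -
  fix i :: 'n
  show "integrable lborel (\<lambda>x. (cmod (hermite_sum S c x))\<^sup>2)"
    using integrable_coordinate_moment_hermite_sum[OF finite level, of i 0 c] by simp
  show "(\<integral>x. (cmod (hermite_sum S c x))\<^sup>2 \<partial>lborel) = (\<Sum>\<mu>\<in>S. (cmod (c \<mu>))\<^sup>2)"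
    using integral_coordinate_moment_hermite_sum[OF finite level, of i 0 c] by (simp add: hermite_fun_orthonormal)
qed

lemma
  shows integrable_second_moment_hermite_sum:
      "integrable lborel (\<lambda>x. (norm x)\<^sup>2 * (cmod (hermite_sum S c x))\<^sup>2)"
    and integral_second_moment_hermite_sum:
      "(\<integral>x. (norm x)\<^sup>2 * (cmod (hermite_sum S c x))\<^sup>2 \<partial>lborel)
        = (real m + real CARD('n) / 2) * (\<Sum>\<mu>\<in>S. (cmod (c \<mu>))\<^sup>2)"
proof -
  have expand: "(norm x)\<^sup>2 * (cmod (hermite_sum S c x))\<^sup>2 = (\<Sum>i\<in>UNIV. (x $ i)\<^sup>2 * (cmod (hermite_sum S c x))\<^sup>2)"
    for x :: "real ^ 'n"
    by (simp add: norm_vec_squared sum_distrib_right)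
  show "integrable lborel (\<lambda>x. (norm x)\<^sup>2 * (cmod (hermite_sum S c x))\<^sup>2)"
    unfolding expand by (intro Bochner_Integration.integrable_sum integrable_coordinate_moment_hermite_sum[OF finite level])
  have "(\<integral>x. (norm x)\<^sup>2 * (cmod (hermite_sum S c x))\<^sup>2 \<partial>lborel)
      = (\<Sum>i\<in>UNIV. \<integral>x. (x $ i)\<^sup>2 * (cmod (hermite_sum S c x))\<^sup>2 \<partial>lborel)"
    unfolding expand
    by (intro Bochner_Integration.integral_sum integrable_coordinate_moment_hermite_sum[OF finite level])
  also have "\<dots> = (\<Sum>i\<in>UNIV. \<Sum>\<mu>\<in>S. (cmod (c \<mu>))\<^sup>2 * (real (\<mu> i) + 1 / 2))"
    by (simp only: integral_coordinate_moment_hermite_sum[OF finite level] hermite_fun_second_moment)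
  also have "\<dots> = (\<Sum>\<mu>\<in>S. (cmod (c \<mu>))\<^sup>2 * (\<Sum>i\<in>UNIV. real (\<mu> i) + 1 / 2))"
    by (subst sum.swap) (simp add: sum_distrib_left)
  also have "\<dots> = (\<Sum>\<mu>\<in>S. (cmod (c \<mu>))\<^sup>2 * (real m + real CARD('n) / 2))"
  proof (intro sum.cong refl)
    fix \<mu> assume "\<mu> \<in> S"
    then have "(\<Sum>i\<in>UNIV. real (\<mu> i)) = real m"
      using level unfolding mi_abs_def by (metis of_nat_sum)
    then show "(cmod (c \<mu>))\<^sup>2 * (\<Sum>i\<in>UNIV. real (\<mu> i) + 1 / 2) = (cmod (c \<mu>))\<^sup>2 * (real m + real CARD('n) / 2)"
      by (simp add: sum.distrib)
  qed
  finally show "(\<integral>x. (norm x)\<^sup>2 * (cmod (hermite_sum S c x))\<^sup>2 \<partial>lborel)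
      = (real m + real CARD('n) / 2) * (\<Sum>\<mu>\<in>S. (cmod (c \<mu>))\<^sup>2)"
    by (simp add: sum_distrib_left mult_ac)
qed

lemma
  shows integrable_fourth_moment_hermite_sum:
      "integrable lborel (\<lambda>x. norm x ^ 4 * (cmod (hermite_sum S c x))\<^sup>2)"
    and integral_fourth_moment_hermite_sum_le:
      "(\<integral>x. norm x ^ 4 * (cmod (hermite_sum S c x))\<^sup>2 \<partial>lborel)
        \<le> 2 * real CARD('n) ^ 2 * (real m + 1)\<^sup>2 * (\<Sum>\<mu>\<in>S. (cmod (c \<mu>))\<^sup>2)"
proof -
  let ?G = "\<lambda>x. (cmod (hermite_sum S c x))\<^sup>2"
  let ?B = "\<lambda>x. real CARD('n) * (\<Sum>i\<in>UNIV. (x $ i) ^ 4 * ?G x)"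
  have integrable_B: "integrable lborel ?B"
    by (intro integrable_mult_right Bochner_Integration.integrable_sum
        integrable_coordinate_moment_hermite_sum[OF finite level])
  have bound: "norm x ^ 4 * ?G x \<le> ?B x" for x
  proof -
    have "norm x ^ 4 * ?G x \<le> real CARD('n) * (\<Sum>i\<in>UNIV. (x $ i) ^ 4) * ?G x"
      by (intro mult_right_mono norm_vec_power4_le) simp
    then show ?thesis
      by (simp add: sum_distrib_right mult.assoc)
  qed
  have dominated: "AE x in lborel. norm (norm x ^ 4 * ?G x) \<le> norm (?B x)"
  proof (intro AE_I2)
    fix x
    have "norm (norm x ^ 4 * ?G x) = norm x ^ 4 * ?G x"
      by simp
    also have "\<dots> \<le> norm (?B x)"
      using bound[of x] by simp
    finally show "norm (norm x ^ 4 * ?G x) \<le> norm (?B x)" .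
  qed
  show integrable: "integrable lborel (\<lambda>x. norm x ^ 4 * ?G x)"
    by (rule Bochner_Integration.integrable_bound[OF integrable_B _ dominated]) measurable
  have "(\<integral>x. norm x ^ 4 * ?G x \<partial>lborel) \<le> (\<integral>x. ?B x \<partial>lborel)"
    using integrable integrable_B bound by (rule integral_mono)
  also have "\<dots> = real CARD('n) * (\<Sum>i\<in>UNIV. \<Sum>\<mu>\<in>S. (cmod (c \<mu>))\<^sup>2
      * (\<integral>t. t ^ 4 * hermite_fun (\<mu> i) t * hermite_fun (\<mu> i) t \<partial>lborel))"
    by (simp add: Bochner_Integration.integral_sum integrable_coordinate_moment_hermite_sum[OF finite level]
        integral_coordinate_moment_hermite_sum[OF finite level])
  also have "\<dots> \<le> real CARD('n) * (\<Sum>i\<in>(UNIV :: 'n set). \<Sum>\<mu>\<in>S. (cmod (c \<mu>))\<^sup>2 * (2 * (real m + 1)\<^sup>2))"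
  proof (intro mult_left_mono sum_mono)
    fix i :: 'n and \<mu> assume "i \<in> UNIV" "\<mu> \<in> S"
    then have "\<mu> i \<le> m"
      using level member_le_sum[of i UNIV \<mu>] unfolding mi_abs_def by fastforce
    then have "2 * (real (\<mu> i) + 1)\<^sup>2 \<le> 2 * (real m + 1)\<^sup>2"
      by (simp add: power_mono)
    then show "(\<integral>t. t ^ 4 * hermite_fun (\<mu> i) t * hermite_fun (\<mu> i) t \<partial>lborel) \<le> 2 * (real m + 1)\<^sup>2"
      using hermite_fun_fourth_moment_le[of "\<mu> i"] by linarith
  qed simp_all
  also have "\<dots> = 2 * real CARD('n) ^ 2 * (real m + 1)\<^sup>2 * (\<Sum>\<mu>\<in>S. (cmod (c \<mu>))\<^sup>2)"
    by (simp add: flip: sum_distrib_right) (simp add: power2_eq_square)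
  finally show "(\<integral>x. norm x ^ 4 * ?G x \<partial>lborel)
      \<le> 2 * real CARD('n) ^ 2 * (real m + 1)\<^sup>2 * (\<Sum>\<mu>\<in>S. (cmod (c \<mu>))\<^sup>2)" .
qed

end

section \<open>The lower bound for the weighted norm\<close>

lemma square_le_split:
  fixes t r \<epsilon> \<alpha> :: real
  assumes "t \<ge> 0" "r > 0" "\<epsilon> > 0" "\<alpha> \<ge> 0"
  shows "t\<^sup>2 \<le> r + \<epsilon> * t ^ 4 + (1 + t) powr \<alpha> / (4 * \<epsilon> * r powr (\<alpha> / 2))"
proof (cases "t\<^sup>2 \<le> r")
  case False
  then have "sqrt r \<le> t"
    using assms(1) real_le_lsqrt by fastforce
  have "r powr (\<alpha> / 2) = sqrt r powr \<alpha>"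
    using assms(2) by (simp add: powr_half_sqrt[symmetric] powr_powr)
  also have "\<dots> \<le> (1 + t) powr \<alpha>"
    using \<open>sqrt r \<le> t\<close> assms by (intro powr_mono2) auto
  finally have "r powr (\<alpha> / 2) \<le> (1 + t) powr \<alpha>" .
  then have "1 / (4 * \<epsilon>) \<le> (1 + t) powr \<alpha> / (4 * \<epsilon> * r powr (\<alpha> / 2))"
    using assms by (simp add: field_simps)
  moreover have "t\<^sup>2 \<le> \<epsilon> * t ^ 4 + 1 / (4 * \<epsilon>)"
    using assms(3) sum_power2_ge_zero[of "2 * \<epsilon> * t\<^sup>2 - 1" 0]
    by (simp add: field_simps power2_eq_square power4_eq_xxxx)
  ultimately show ?thesis
    using assms(2) by linarith
next
  case True
  have "0 \<le> \<epsilon> * t ^ 4 + (1 + t) powr \<alpha> / (4 * \<epsilon> * r powr (\<alpha> / 2))"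
    using assms by simp
  with True show ?thesis
    by linarith
qed

text \<open>A Paley-Zygmund type estimate: a comparable fourth moment prevents the mass of \<open>G\<close>
  from hiding near the origin, so the second moment controls every weighted integral.\<close>
lemma weighted_integral_lower_bound:
  fixes M :: "'a::real_normed_vector measure" and G :: "'a \<Rightarrow> real"
  assumes "\<alpha> \<ge> 0" "s > 0" "b > 0" "\<And>x. G x \<ge> 0"
    and "integrable M G" "integrable M (\<lambda>x. (norm x)\<^sup>2 * G x)" "integrable M (\<lambda>x. norm x ^ 4 * G x)"
    and "integrable M (\<lambda>x. G x * (1 + norm x) powr \<alpha>)"
    and second: "(\<integral>x. (norm x)\<^sup>2 * G x \<partial>M) = s * (\<integral>x. G x \<partial>M)"
    and fourth: "(\<integral>x. norm x ^ 4 * G x \<partial>M) \<le> b * s\<^sup>2 * (\<integral>x. G x \<partial>M)"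
  shows "(s / 4) powr (\<alpha> / 2) * (\<integral>x. G x \<partial>M) \<le> 2 * b * (\<integral>x. G x * (1 + norm x) powr \<alpha> \<partial>M)"
proof -
  define r \<epsilon> \<rho> where "r = s / 4" and "\<epsilon> = 1 / (4 * b * s)" and "\<rho> = (s / 4) powr (\<alpha> / 2)"
  define N W where "N = (\<integral>x. G x \<partial>M)" and "W = (\<integral>x. G x * (1 + norm x) powr \<alpha> \<partial>M)"
  have "r > 0" "\<epsilon> > 0" "\<rho> > 0"
    using assms(2,3) by (simp_all add: r_def \<epsilon>_def \<rho>_def)
  have N: "N \<ge> 0"
    unfolding N_def using assms(4) by (simp add: integral_nonneg_AE)
  have "(norm x)\<^sup>2 * G x
      \<le> r * G x + \<epsilon> * (norm x ^ 4 * G x) + G x * (1 + norm x) powr \<alpha> / (4 * \<epsilon> * \<rho>)" for x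
    using mult_right_mono[OF square_le_split[OF norm_ge_zero \<open>r > 0\<close> \<open>\<epsilon> > 0\<close> assms(1)] assms(4)]
    by (simp add: r_def \<rho>_def algebra_simps add_divide_distrib)
  then have "(\<integral>x. (norm x)\<^sup>2 * G x \<partial>M)
      \<le> (\<integral>x. r * G x + \<epsilon> * (norm x ^ 4 * G x) + G x * (1 + norm x) powr \<alpha> / (4 * \<epsilon> * \<rho>) \<partial>M)"
    using assms(5-8) by (intro integral_mono) auto
  also have "\<dots> = r * N + \<epsilon> * (\<integral>x. norm x ^ 4 * G x \<partial>M) + W / (4 * \<epsilon> * \<rho>)"
    unfolding N_def W_def using assms(5-8) by simp
  finally have "s * N \<le> r * N + \<epsilon> * (\<integral>x. norm x ^ 4 * G x \<partial>M) + W / (4 * \<epsilon> * \<rho>)"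
    unfolding N_def second .
  also have "\<dots> \<le> r * N + \<epsilon> * (b * s\<^sup>2 * N) + W / (4 * \<epsilon> * \<rho>)"
    using fourth \<open>\<epsilon> > 0\<close> unfolding N_def by simp
  also have "\<dots> = s * N / 2 + b * s * W / \<rho>"
    using assms(2,3) by (simp add: r_def \<epsilon>_def field_simps power2_eq_square)
  finally have "\<rho> * N \<le> 2 * b * W"
    using assms(2) \<open>\<rho> > 0\<close> by (simp add: field_simps)
  then show ?thesis
    unfolding \<rho>_def N_def W_def .
qed

lemma finite_mi_abs_eq: "finite {\<mu> :: 'n::finite \<Rightarrow> nat. mi_abs \<mu> = m}"
proof -
  have "\<mu> i \<le> m" if "mi_abs \<mu> = m" for \<mu> :: "'n \<Rightarrow> nat" and i
    using that member_le_sum[of i UNIV \<mu>] unfolding mi_abs_def by simp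
  then have "{\<mu> :: 'n \<Rightarrow> nat. mi_abs \<mu> = m} \<subseteq> {\<mu>. \<forall>i. (i \<in> UNIV \<longrightarrow> \<mu> i \<in> {..m}) \<and> (i \<notin> UNIV \<longrightarrow> \<mu> i = 0)}"
    by auto
  moreover have "finite {\<mu> :: 'n \<Rightarrow> nat. \<forall>i. (i \<in> UNIV \<longrightarrow> \<mu> i \<in> {..m}) \<and> (i \<notin> UNIV \<longrightarrow> \<mu> i = 0)}"
    by (rule finite_set_of_finite_funs) simp_all
  ultimately show ?thesis
    by (rule finite_subset)
qed

text \<open>Eigenvalues 2|mu| + n of different levels are 2 apart.\<close>
lemma spectral_window_single_level:
  fixes k :: nat
  obtains m where "\<And>\<mu> :: 'n::finite \<Rightarrow> nat. herm_eig \<mu> \<in> {real k..<real k + 1} \<Longrightarrow> mi_abs \<mu> = m"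
    and "real k \<le> 2 * real m + real CARD('n)"
proof (cases "\<exists>\<mu> :: 'n \<Rightarrow> nat. herm_eig \<mu> \<in> {real k..<real k + 1}")
  case True
  then obtain \<mu>\<^sub>0 :: "'n \<Rightarrow> nat" where \<mu>\<^sub>0: "herm_eig \<mu>\<^sub>0 \<in> {real k..<real k + 1}"
    by blast
  have "mi_abs \<mu> = mi_abs \<mu>\<^sub>0" if "herm_eig \<mu> \<in> {real k..<real k + 1}" for \<mu> :: "'n \<Rightarrow> nat"
  proof -
    have "\<bar>2 * real (mi_abs \<mu>) - 2 * real (mi_abs \<mu>\<^sub>0)\<bar> < 1"
      using that \<mu>\<^sub>0 unfolding herm_eig_def by auto
    then show ?thesis
      by linarith
  qed
  moreover have "real k \<le> 2 * real (mi_abs \<mu>\<^sub>0) + real CARD('n)"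
    using \<mu>\<^sub>0 unfolding herm_eig_def by simp
  ultimately show thesis
    using that by blast
next
  case False
  then show thesis
    using that[of k] by auto
qed

lemma hermite_sum_single_level_integral_bound:
  fixes S :: "('n::finite \<Rightarrow> nat) set" and \<alpha> :: real
  assumes "\<alpha> \<ge> 0" "finite S" and level: "\<And>\<mu>. \<mu> \<in> S \<Longrightarrow> mi_abs \<mu> = m"
  shows "((2 * real m + real CARD('n)) / 8) powr (\<alpha> / 2) * (\<integral>x. (cmod (hermite_sum S c x))\<^sup>2 \<partial>lborel)
    \<le> 16 * real CARD('n) ^ 2 * (\<integral>x. (cmod (hermite_sum S c x))\<^sup>2 * (1 + norm x) powr \<alpha> \<partial>lborel)"
proof -
  define L n where "L = 2 * real m + real CARD('n)" and "n = real CARD('n)"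
  define G where "G x = (cmod (hermite_sum S c x))\<^sup>2" for x
  define N where "N = (\<integral>x. G x \<partial>lborel)"
  have "n \<ge> 1"
    unfolding n_def by (simp add: Suc_le_eq)
  then have "L > 0" "real m + 1 \<le> L"
    unfolding L_def n_def by linarith+
  have "N \<ge> 0"
    unfolding N_def G_def by (simp add: integral_nonneg_AE)
  have integrable:
    "integrable lborel G" "integrable lborel (\<lambda>x. (norm x)\<^sup>2 * G x)"
    "integrable lborel (\<lambda>x. norm x ^ 4 * G x)" "integrable lborel (\<lambda>x. G x * (1 + norm x) powr \<alpha>)"
    unfolding G_def
    using integrable_norm_hermite_sum[OF assms(2) level] integrable_second_moment_hermite_sum[OF assms(2) level]
      integrable_fourth_moment_hermite_sum[OF assms(2) level] integrable_weighted_norm_hermite_sum[OF assms(2,1)]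
    by blast+
  have second: "(\<integral>x. (norm x)\<^sup>2 * G x \<partial>lborel) = L / 2 * N"
    unfolding G_def N_def L_def
    using integral_second_moment_hermite_sum[OF assms(2) level] integral_norm_hermite_sum[OF assms(2) level]
    by (simp add: field_simps)
  have "(\<integral>x. norm x ^ 4 * G x \<partial>lborel) \<le> 2 * n\<^sup>2 * (real m + 1)\<^sup>2 * N"
    using integral_fourth_moment_hermite_sum_le[OF assms(2) level, of c]
      integral_norm_hermite_sum[OF assms(2) level, of c]
    unfolding G_def N_def n_def by simp
  also have "\<dots> \<le> 2 * n\<^sup>2 * L\<^sup>2 * N"
    using \<open>real m + 1 \<le> L\<close> \<open>N \<ge> 0\<close> by (intro mult_right_mono mult_left_mono power_mono) auto
  finally have fourth: "(\<integral>x. norm x ^ 4 * G x \<partial>lborel) \<le> 8 * n\<^sup>2 * (L / 2)\<^sup>2 * N"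
    by (simp add: power_divide mult_ac)
  have "(L / 2 / 4) powr (\<alpha> / 2) * N \<le> 2 * (8 * n\<^sup>2) * (\<integral>x. G x * (1 + norm x) powr \<alpha> \<partial>lborel)"
    unfolding N_def using \<open>L > 0\<close> \<open>n \<ge> 1\<close>
    by (intro weighted_integral_lower_bound[OF assms(1) _ _ _ integrable second[unfolded N_def] fourth[unfolded N_def]])
      (simp_all add: G_def)
  then show ?thesis
    unfolding L_def n_def N_def G_def by simp
qed

lemma hermite_sum_single_level_bound:
  fixes S :: "('n::finite \<Rightarrow> nat) set" and \<alpha> :: real
  assumes "\<alpha> \<ge> 0" "finite S" and level: "\<And>\<mu>. \<mu> \<in> S \<Longrightarrow> mi_abs \<mu> = m"
  shows "(2 * real m + real CARD('n)) powr (\<alpha> / 4) * L2_norm (hermite_sum S c)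
    \<le> 4 * real CARD('n) * 8 powr (\<alpha> / 4) * L2_weighted_norm \<alpha> (hermite_sum S c)"
proof -
  define L K where "L = 2 * real m + real CARD('n)" and "K = 4 * real CARD('n) * 8 powr (\<alpha> / 4)"
  define N W where "N = (\<integral>x. (cmod (hermite_sum S c x))\<^sup>2 \<partial>lborel)"
    and "W = (\<integral>x. (cmod (hermite_sum S c x))\<^sup>2 * (1 + norm x) powr \<alpha> \<partial>lborel)"
  have "L > 0" "K > 0"
    by (simp_all add: L_def K_def add_nonneg_pos)
  have "8 powr (\<alpha> / 2) * (L / 8) powr (\<alpha> / 2) = L powr (\<alpha> / 2)"
    using \<open>L > 0\<close> by (simp flip: powr_mult)
  then have "L powr (\<alpha> / 2) * N = 8 powr (\<alpha> / 2) * ((L / 8) powr (\<alpha> / 2) * N)"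
    by (simp add: mult.assoc)
  also have "\<dots> \<le> 8 powr (\<alpha> / 2) * (16 * real CARD('n) ^ 2 * W)"
    using hermite_sum_single_level_integral_bound[OF assms] unfolding L_def N_def W_def
    by (rule mult_left_mono) simp_all
  also have "\<dots> = K\<^sup>2 * W"
    unfolding K_def by (simp add: power_mult_distrib power2_eq_square flip: powr_add)
  finally have "L powr (\<alpha> / 2) * N \<le> K\<^sup>2 * W" .
  have "L powr (\<alpha> / 4) * sqrt N = sqrt (L powr (\<alpha> / 2) * N)"
    using \<open>L > 0\<close> by (simp add: real_sqrt_mult powr_half_sqrt[symmetric] powr_powr)
  also have "\<dots> \<le> sqrt (K\<^sup>2 * W)"
    by (rule real_sqrt_le_mono) fact
  also have "\<dots> = K * sqrt W"
    using \<open>K > 0\<close> by (simp add: real_sqrt_mult)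
  finally show ?thesis
    unfolding L2_norm_def L2_weighted_norm_def L_def K_def N_def W_def .
qed

lemma spectral_window_projection_bound:
  fixes f :: "real ^ 'n::finite \<Rightarrow> complex" and \<alpha> :: real
  assumes "\<alpha> \<ge> 0"
  shows "real k powr (\<alpha> / 4) * L2_norm (spec_proj {real k..<real k + 1} f)
    \<le> 4 * real CARD('n) * 8 powr (\<alpha> / 4) * L2_weighted_norm \<alpha> (spec_proj {real k..<real k + 1} f)"
proof -
  define S where "S = {\<mu> :: 'n \<Rightarrow> nat. herm_eig \<mu> \<in> {real k..<real k + 1}}"
  obtain m where "\<And>\<mu> :: 'n \<Rightarrow> nat. herm_eig \<mu> \<in> {real k..<real k + 1} \<Longrightarrow> mi_abs \<mu> = m"
    and "real k \<le> 2 * real m + real CARD('n)"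
    using spectral_window_single_level[where 'n = 'n, of k] by metis
  then have level: "\<And>\<mu>. \<mu> \<in> S \<Longrightarrow> mi_abs \<mu> = m"
    unfolding S_def by blast
  then have "S \<subseteq> {\<mu>. mi_abs \<mu> = m}"
    by blast
  then have "finite S"
    using finite_mi_abs_eq by (rule finite_subset)
  have "spec_proj {real k..<real k + 1} f = hermite_sum S (herm_coeff f)"
    unfolding spec_proj_def hermite_sum_def S_def by (simp add: fun_eq_iff)
  moreover have "real k powr (\<alpha> / 4) * L2_norm (hermite_sum S (herm_coeff f))
      \<le> (2 * real m + real CARD('n)) powr (\<alpha> / 4) * L2_norm (hermite_sum S (herm_coeff f))"
    using \<open>real k \<le> 2 * real m + real CARD('n)\<close> assms
    by (intro mult_right_mono powr_mono2) (simp_all add: L2_norm_def)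
  ultimately show ?thesis
    using hermite_sum_single_level_bound[OF assms \<open>finite S\<close> level, of "herm_coeff f"] by simp
qed

theorem lemma4p10:
  fixes \<alpha> :: real
  assumes "\<alpha> \<ge> 0"
  shows "\<exists>C>0. \<forall>(k::nat) (f :: real ^ 'n::finite \<Rightarrow> complex). f \<in> L2 \<longrightarrow>
           real k powr (\<alpha> / 4) * L2_norm (spec_proj {real k..<real k + 1} f)
             \<le> C * L2_weighted_norm \<alpha> (spec_proj {real k..<real k + 1} f)"
proof -
  have "4 * real CARD('n) * 8 powr (\<alpha> / 4) > 0"
    by simp
  with spectral_window_projection_bound[OF assms] show ?thesis
    by blast
qed

end
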